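(* Let $\mu,\nu$ be Radon measures on $\mathbb{R}$ and $I\subset\mathbb{R}$ an interval. Then $\alpha_{s,\mu,\nu}(I)\le 2$, and, whenever $\nu(I)>0$ and $\int\varphi\,d\nu_I>0$, $$\alpha_{s,\mu,\nu}(I)\le\frac{2\alpha_{\mu,\nu}(I)}{\int\varphi\,d\nu_I}.$$ Moreover, if $\nu$ is globally doubling with constant $D$ ($\nu(B(x,2r))\le D\nu(B(x,r))$ for all $x,r$), and $I\subset J\subset\mathbb{R}$ are intervals with $|I|\ge\theta|J|$ for some $\theta>0$, then $\alpha_{s,\mu,\nu}(I)\le C\,\alpha_{s,\mu,\nu}(J)$ for a constant $C$ depending only on $D$ and $\theta$.
   Context: Wasserstein distance: $\mathbb{W}_1(\nu_1,\nu_2) := \sup_\psi |\int\psi\,d\nu_1 - \int\psi\,d\nu_2|$ over all $1$-Lipschitz $\psi\colon\mathbb{R}\to\mathbb{R}$ supported on $[0,1]$. For an interval $I$, $T_I$ is the increasing affine map taking $\overline I$ onto $[0,1]$; $\mu_I := T_{I\sharp}(\mu|_I)/\mu(I)$, $\nu_I := T_{I\sharp}(\nu|_I)/\nu(I)$ (zero if the mass vanishes), $\alpha_{\mu,\nu}(I) := \mathbb{W}_1(\mu_I,\nu_I)$. Let $\varphi(x) := \operatorname{dist}(x,\mathbb{R}\setminus(0,1))$, $\varphi_I := \varphi\circ T_I$. Smooth $\alpha$-numbers: $\alpha_{s,\mu,\nu}(I) := \mathbb{W}_1(\mu_{\varphi,I},\nu_{\varphi,I})$, where $\mu_{\varphi,I}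 := T_{I\sharp}(\mu|_I)/\int\varphi_I\,d\mu$ and $\nu_{\varphi,I} := T_{I\sharp}(\nu|_I)/\int\varphi_I\,d\nu$, with $\mu_{\varphi,I}:\equiv0$ if $\int\varphi_I\,d\mu=0$ (similarly for $\nu$). *)

theory Defs
  imports "HOL-Analysis.Analysis"
begin

text \<open>Radon measure on the real line: a Borel measure that is finite on compact sets
  (on the real line, local finiteness already implies regularity).\<close>
definition radon :: "real measure \<Rightarrow> bool" where
  "radon M \<longleftrightarrow> sets M = sets borel \<and> (\<forall>K. compact K \<longrightarrow> emeasure M K < \<infinity>)"

text \<open>Bounded interval of positive length (needed for T_I to be defined).\<close>
definition real_interval :: "real set \<Rightarrow> bool" where
  "real_interval I \<longleftrightarrow> is_interval I \<and> bounded I \<and> Inf I < Sup I"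

definition ilen :: "real set \<Rightarrow> real" where
  "ilen I = Sup I - Inf I"

definition T_int :: "real set \<Rightarrow> real \<Rightarrow> real" where
  "T_int I x = (x - Inf I) / (Sup I - Inf I)"

definition phi :: "real \<Rightarrow> real" where
  "phi x = infdist x (- {0<..<1})"

definition phi_I :: "real set \<Rightarrow> real \<Rightarrow> real" where
  "phi_I I = phi \<circ> T_int I"

definition W1 :: "real measure \<Rightarrow> real measure \<Rightarrow> real" where
  "W1 m1 m2 = (SUP \<psi> \<in> {\<psi> :: real \<Rightarrow> real. 1-lipschitz_on UNIV \<psi> \<and> closure {x. \<psi> x \<noteq> 0} \<subseteq> {0..1}}.
       \<bar>integral\<^sup>L m1 \<psi> - integral\<^sup>L m2 \<psi>\<bar>)"

definition push_I :: "real measure \<Rightarrow> real set \<Rightarrow> real measure" where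
  "push_I M I = distr (restrict_space M I) borel (T_int I)"

definition norm_I :: "real measure \<Rightarrow> real set \<Rightarrow> real measure" where
  "norm_I M I = (if emeasure M I = 0 then null_measure borel
                 else scale_measure (1 / emeasure M I) (push_I M I))"

definition norm_phi_I :: "real measure \<Rightarrow> real set \<Rightarrow> real measure" where
  "norm_phi_I M I = (let c = integral\<^sup>L M (phi_I I) in
     if c = 0 then null_measure borel else scale_measure (ennreal (1 / c)) (push_I M I))"

definition alpha :: "real measure \<Rightarrow> real measure \<Rightarrow> real set \<Rightarrow> real" where
  "alpha \<mu> \<nu> I = W1 (norm_I \<mu> I) (norm_I \<nu> I)"

definition alpha_s :: "real measure \<Rightarrow> real measure \<Rightarrow> real set \<Rightarrow> real" where
  "alpha_s \<mu> \<nu> I = W1 (norm_phi_I \<mu> I) (norm_phi_I \<nu> I)"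

definition doubling :: "real \<Rightarrow> real measure \<Rightarrow> bool" where
  "doubling D \<nu> \<longleftrightarrow> (\<forall>x r. r > 0 \<longrightarrow> emeasure \<nu> (ball x (2 * r)) \<le> ennreal D * emeasure \<nu> (ball x r))"

end

theory Submission
  imports Defs
begin

text \<open>Every admissible test function \<open>\<psi>\<close> satisfies \<open>|\<psi>| \<le> \<phi>\<close>, so
  \<open>\<integral>\<psi> d\<mu>\<^sub>\<phi>\<^sub>,\<^sub>I = \<integral>\<psi>\<circ>T\<^sub>I d\<mu> / \<integral>\<phi>\<circ>T\<^sub>I d\<mu>\<close> lies in \<open>[-1,1]\<close>; this gives the bound 2.
  The same quotient equals \<open>\<integral>\<psi> d\<mu>\<^sub>I / \<integral>\<phi> d\<mu>\<^sub>I\<close>, and an elementary estimate compares two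
  quotients \<open>X/p\<close> and \<open>Y/q\<close> whose numerators and denominators are \<open>\<alpha>\<close>-close:
  \<open>|X/p - Y/q| \<le> 2\<alpha>/q\<close> as soon as \<open>|X| \<le> p\<close>.
  For \<open>I \<subseteq> J\<close> the rescaled function \<open>(|I|/|J|) \<psi>\<circ>T\<^sub>I\<circ>T\<^sub>J\<^sup>-\<^sup>1\<close> is again admissible, so the
  quotient for \<open>I\<close> is a quotient of two \<open>\<alpha>\<^sub>s(J)\<close>-close integrals against \<open>\<mu>\<^sub>\<phi>\<^sub>,\<^sub>J\<close> and \<open>\<nu>\<^sub>\<phi>\<^sub>,\<^sub>J\<close>.
  Its denominator is bounded below by \<open>\<theta>/(2D\<^sup>k)\<close>: doubling, iterated \<open>k\<close> times (\<open>2\<^sup>k \<ge> 4/\<theta>\<close>) from the middle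
  half of \<open>I\<close> (where \<open>\<phi>\<^sub>I \<ge> 1/4\<close>), controls \<open>\<nu>(J)\<close>.\<close>

section \<open>Test functions\<close>

definition test_functions :: "(real \<Rightarrow> real) set" where
  "test_functions = {\<psi>. 1-lipschitz_on UNIV \<psi> \<and> closure {x. \<psi> x \<noteq> 0} \<subseteq> {0..1}}"

lemma W1_eq_SUP_test_functions:
  "W1 m1 m2 = (SUP \<psi> \<in> test_functions. \<bar>integral\<^sup>L m1 \<psi> - integral\<^sup>L m2 \<psi>\<bar>)"
  unfolding W1_def test_functions_def ..

lemma test_function_dist_le: "\<psi> \<in> test_functions \<Longrightarrow> \<bar>\<psi> x - \<psi> y\<bar> \<le> \<bar>x - y\<bar>"
  unfolding test_functions_def using lipschitz_onD[of 1 UNIV \<psi> x y] by (auto simp: dist_real_def)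

lemma test_function_continuous: "\<psi> \<in> test_functions \<Longrightarrow> continuous_on UNIV \<psi>"
  unfolding test_functions_def using lipschitz_on_continuous_on by blast

lemma test_function_borel: "\<psi> \<in> test_functions \<Longrightarrow> \<psi> \<in> borel_measurable borel"
  using test_function_continuous borel_measurable_continuous_onI by blast

lemma test_function_vanishes:
  assumes "\<psi> \<in> test_functions" "x \<notin> {0<..<1}"
  shows "\<psi> x = 0"
proof -
  have "closed {x. \<psi> x = 0}"
    using closed_Collect_eq[OF test_function_continuous[OF assms(1)]] by simp
  moreover have "- {0..1} \<subseteq> {x. \<psi> x = 0}"
  proof -
    have "closure {x. \<psi> x \<noteq> 0} \<subseteq> {0..1}"
      using assms(1) unfolding test_functions_def by simp
    with closure_subset have "{x. \<psi> x \<noteq> 0} \<subseteq> {0..1}" by (rule order_trans)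
    then show ?thesis by blast
  qed
  ultimately have "closure (- {0..1}) \<subseteq> {x. \<psi> x = 0}"
    by (rule closure_minimal[rotated])
  moreover have "closure (- {0..1}) = - {0<..<1::real}"
    by (simp add: closure_interior)
  ultimately show ?thesis using assms(2) by blast
qed

lemma zero_in_test_functions: "(\<lambda>_. 0) \<in> test_functions"
  unfolding test_functions_def by (auto intro: lipschitz_onI)

lemma phi_nonneg: "0 \<le> phi x"
  unfolding phi_def by (rule infdist_nonneg)

lemma phi_vanishes: "x \<notin> {0<..<1} \<Longrightarrow> phi x = 0"
  unfolding phi_def by simp

lemma phi_ge:
  assumes "\<And>y. y \<notin> {0<..<1} \<Longrightarrow> d \<le> dist x y"
  shows "d \<le> phi x"
proof -
  have ne: "- {0<..<1::real} \<noteq> {}"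
    by (metis ComplI greaterThanLessThan_iff less_irrefl empty_iff)
  show ?thesis
    unfolding phi_def infdist_notempty[OF ne] by (rule cINF_greatest) (use ne assms in auto)
qed

lemma phi_le_half: "phi x \<le> 1/2"
proof -
  have "phi x \<le> \<bar>x\<bar>" "phi x \<le> \<bar>x - 1\<bar>"
    unfolding phi_def using infdist_le[of 0 "- {0<..<1}" x] infdist_le[of 1 "- {0<..<1}" x]
    by (auto simp: dist_real_def)
  then show ?thesis
    using phi_vanishes[of x] by (cases "x \<in> {0<..<1}") auto
qed

lemma phi_ge_quarter: "x \<in> {1/4..3/4} \<Longrightarrow> 1/4 \<le> phi x"
  by (rule phi_ge) (auto simp: dist_real_def)

lemma phi_in_test_functions: "phi \<in> test_functions"
  unfolding test_functions_def
proof safe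
  show "1-lipschitz_on UNIV phi"
  proof (rule lipschitz_onI)
    fix x y :: real
    show "dist (phi x) (phi y) \<le> 1 * dist x y"
      using infdist_triangle_abs[of x "- {0<..<1}" y] by (simp add: phi_def dist_real_def)
  qed simp
  have "{x. phi x \<noteq> 0} \<subseteq> {0<..<1}"
    using phi_vanishes by blast
  then have "{x. phi x \<noteq> 0} \<subseteq> {0..1}"
    by fastforce
  then show "x \<in> {0..1}" if "x \<in> closure {x. phi x \<noteq> 0}" for x
    using closure_minimal[of "{x. phi x \<noteq> 0}" "{0..1}"] that by auto
qed

lemma test_function_abs_le_phi:
  assumes "\<psi> \<in> test_functions"
  shows "\<bar>\<psi> x\<bar> \<le> phi x"
proof (cases "x \<in> {0<..<1}")
  case False
  then show ?thesis using test_function_vanishes[OF assms] phi_nonneg by simp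
next
  case True
  show ?thesis
  proof (rule phi_ge)
    fix y :: real
    assume "y \<notin> {0<..<1}"
    then show "\<bar>\<psi> x\<bar> \<le> dist x y"
      using test_function_vanishes[OF assms, of y] test_function_dist_le[OF assms, of x y]
      by (simp add: dist_real_def)
  qed
qed

lemma test_function_abs_le_half: "\<psi> \<in> test_functions \<Longrightarrow> \<bar>\<psi> x\<bar> \<le> 1/2"
  using test_function_abs_le_phi phi_le_half order_trans by blast

lemma radon_sets_eq: "radon M \<Longrightarrow> sets M = sets borel"
  unfolding radon_def by simp

lemma radon_space_eq: "radon M \<Longrightarrow> space M = UNIV"
  using sets_eq_imp_space_eq[of M borel] radon_sets_eq by simp

lemma radon_borel_measurable:
  assumes "radon M" "f \<in> borel_measurable borel"
  shows "f \<in> borel_measurable M"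
  using assms(2) measurable_cong_sets[OF radon_sets_eq[OF assms(1)] refl] by blast

lemma radon_emeasure_bounded: 
  assumes "radon M" "bounded A"
  shows "emeasure M A < \<infinity>"
proof -
  have "emeasure M (closure A) < \<infinity>"
    using assms unfolding radon_def by simp
  moreover have "closure A \<in> sets M"
    using radon_sets_eq[OF assms(1)] by simp
  ultimately show ?thesis
    using emeasure_mono[OF closure_subset, of A M] by (meson order.strict_trans1)
qed

lemma radon_fmeasurable: "radon M \<Longrightarrow> bounded A \<Longrightarrow> A \<in> sets borel \<Longrightarrow> A \<in> fmeasurable M"
  using radon_emeasure_bounded[of M A] radon_sets_eq[of M] unfolding fmeasurable_def by simp

lemma real_interval_borel: "real_interval I \<Longrightarrow> I \<in> sets borel"
  unfolding real_interval_def using real_interval_borel_measurable by blast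

lemma real_interval_bounds:
  assumes "real_interval I" "I \<noteq> {}"
  shows "{Inf I<..<Sup I} \<subseteq> I" "I \<subseteq> {Inf I..Sup I}"
proof -
  have bdd: "bdd_above I" "bdd_below I"
    using assms(1) unfolding real_interval_def by (auto intro: bounded_imp_bdd_above bounded_imp_bdd_below)
  show "{Inf I<..<Sup I} \<subseteq> I"
  proof
    fix x assume "x \<in> {Inf I<..<Sup I}"
    then obtain y z where "y \<in> I" "y < x" "z \<in> I" "x < z"
      using cInf_less_iff[OF assms(2) bdd(2)] less_cSup_iff[OF assms(2) bdd(1)] by auto
    then show "x \<in> I"
      using assms(1) unfolding real_interval_def is_interval_1 by (meson less_imp_le)
  qed
  show "I \<subseteq> {Inf I..Sup I}"
    using cInf_lower[OF _ bdd(2)] cSup_upper[OF _ bdd(1)] by auto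
qed

lemma real_interval_mono_bounds:
  assumes "real_interval J" "I \<subseteq> J" "I \<noteq> {}"
  shows "Inf J \<le> Inf I" "Sup I \<le> Sup J"
proof -
  have "bdd_above J" "bdd_below J"
    using assms(1) unfolding real_interval_def by (auto intro: bounded_imp_bdd_above bounded_imp_bdd_below)
  then show "Inf J \<le> Inf I" "Sup I \<le> Sup J"
    using cInf_superset_mono cSup_subset_mono assms(2,3) by blast+
qed

lemma T_int_borel: "T_int I \<in> borel_measurable borel"
  unfolding T_int_def by measurable

lemma T_int_in_open_interval:
  assumes "Inf I < Sup I" "T_int I x \<in> {0<..<1}"
  shows "x \<in> {Inf I<..<Sup I}"
  using assms unfolding T_int_def by (auto simp: field_simps)

section \<open>Integrals against the normalised push-forwards\<close>

definition pullback_integral :: "real measure \<Rightarrow> real set \<Rightarrow> (real \<Rightarrow> real) \<Rightarrow> real" where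
  "pullback_integral M I f = (\<integral>x. f (T_int I x) \<partial>M)"

lemma integrable_pullback:
  assumes "radon M" "real_interval I" "\<psi> \<in> test_functions"
  shows "integrable M (\<lambda>x. \<psi> (T_int I x))"
proof (rule Bochner_Integration.integrable_bound)
  have "emeasure M {Inf I..Sup I} < \<infinity>"
    by (rule radon_emeasure_bounded[OF assms(1)]) simp
  then show "integrable M (\<lambda>x. indicator {Inf I..Sup I} x / 2 :: real)"
    using radon_sets_eq[OF assms(1)] by simp
  show "(\<lambda>x. \<psi> (T_int I x)) \<in> borel_measurable M"
    by (rule radon_borel_measurable[OF assms(1)])
      (use test_function_borel[OF assms(3)] T_int_borel in measurable)
  have ab: "Inf I < Sup I"
    using assms(2) unfolding real_interval_def by simp
  show "AE x in M. norm (\<psi> (T_int I x)) \<le> norm (indicator {Inf I..Sup I} x / 2 :: real)"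
  proof (rule AE_I2)
    fix x
    show "norm (\<psi> (T_int I x)) \<le> norm (indicator {Inf I..Sup I} x / 2 :: real)"
    proof (cases "T_int I x \<in> {0<..<1}")
      case True
      then have "x \<in> {Inf I..Sup I}"
        using T_int_in_open_interval[OF ab, of x] by simp
      then show ?thesis
        using test_function_abs_le_half[OF assms(3)] by simp
    next
      case False
      then show ?thesis
        using test_function_vanishes[OF assms(3)] by simp
    qed
  qed
qed

lemma integral_push_I:
  fixes \<psi> :: "real \<Rightarrow> real"
  assumes "radon M" "I \<in> sets borel" "\<psi> \<in> borel_measurable borel"
  shows "integral\<^sup>L (push_I M I) \<psi> = (\<integral>x. indicator I x * \<psi> (T_int I x) \<partial>M)"
proof -
  have "T_int I \<in> measurable (restrict_space M I) borel"
    by (rule measurable_restrict_space1) (rule radon_borel_measurable[OF assms(1) T_int_borel])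
  then have "integral\<^sup>L (push_I M I) \<psi> = integral\<^sup>L (restrict_space M I) (\<lambda>x. \<psi> (T_int I x))"
    unfolding push_I_def using assms(3) by (rule integral_distr)
  also have "\<dots> = (\<integral>x. indicator I x * \<psi> (T_int I x) \<partial>M)"
    using assms radon_space_eq radon_sets_eq by (subst integral_restrict_space) auto
  finally show ?thesis .
qed

lemma integral_push_I_pullback:
  assumes "radon M" "real_interval I" "I \<noteq> {}" "\<psi> \<in> test_functions"
  shows "integral\<^sup>L (push_I M I) \<psi> = pullback_integral M I \<psi>"
proof -
  have vanish: "\<psi> (T_int I x) = 0" if "x \<notin> I" for x
  proof (rule test_function_vanishes[OF assms(4)], rule notI)
    assume "T_int I x \<in> {0<..<1}"
    then have "x \<in> {Inf I<..<Sup I}"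
      using assms(2) T_int_in_open_interval unfolding real_interval_def by blast
    then show False
      using that real_interval_bounds(1)[OF assms(2,3)] by blast
  qed
  show ?thesis
    unfolding integral_push_I[OF assms(1) real_interval_borel[OF assms(2)]
        test_function_borel[OF assms(4)]] pullback_integral_def
    by (rule Bochner_Integration.integral_cong) (auto simp: indicator_def vanish)
qed

lemma integral_scale_measure:
  fixes f :: "'a \<Rightarrow> real"
  assumes "0 \<le> r" "f \<in> borel_measurable N"
  shows "integral\<^sup>L (scale_measure (ennreal r) N) f = r * integral\<^sup>L N f"
proof -
  have "scale_measure (ennreal r) N = density N (\<lambda>_. ennreal r)"
    by (rule measure_eqI) (auto simp: emeasure_density_const)
  then show ?thesis
    using integral_density[of f N "\<lambda>_. r"] assms by simp
qed

lemma integral_phi_I: "integral\<^sup>L M (phi_I I) = pullback_integral M I phi"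
  unfolding pullback_integral_def phi_I_def comp_def ..

lemma pullback_integral_phi_nonneg: "0 \<le> pullback_integral M I phi"
  unfolding pullback_integral_def by (rule integral_nonneg_AE) (simp add: phi_nonneg)

text \<open>The convention \<open>\<mu>\<^sub>\<phi>\<^sub>,\<^sub>I = 0\<close> when \<open>\<integral>\<phi>\<^sub>I d\<mu> = 0\<close> is absorbed by \<open>x / 0 = 0\<close>.\<close>

lemma integral_norm_phi_I:
  assumes "radon M" "real_interval I" "I \<noteq> {}" "\<psi> \<in> test_functions"
  shows "integral\<^sup>L (norm_phi_I M I) \<psi> = pullback_integral M I \<psi> / pullback_integral M I phi"
proof -
  have "\<psi> \<in> borel_measurable (push_I M I)"
    using test_function_borel[OF assms(4)] unfolding push_I_def by simp
  then show ?thesis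
    using pullback_integral_phi_nonneg[of M I] unfolding norm_phi_I_def Let_def integral_phi_I
    by (simp add: integral_scale_measure integral_push_I_pullback[OF assms])
qed

lemma integral_norm_phi_I_empty:
  assumes "radon M" "\<psi> \<in> test_functions"
  shows "integral\<^sup>L (norm_phi_I M {}) \<psi> = 0"
proof -
  have "\<psi> \<in> borel_measurable (push_I M {})"
    using test_function_borel[OF assms(2)] unfolding push_I_def by simp
  moreover have "integral\<^sup>L (push_I M {}) \<psi> = 0"
    using integral_push_I[OF assms(1) _ test_function_borel[OF assms(2)]] by simp
  ultimately show ?thesis
    using pullback_integral_phi_nonneg[of M "{}"] unfolding norm_phi_I_def Let_def integral_phi_I
    by (simp add: integral_scale_measure)
qed

lemma integral_norm_I:
  assumes "radon M" "real_interval I" "I \<noteq> {}" "\<psi> \<in> test_functions"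
  shows "integral\<^sup>L (norm_I M I) \<psi> = pullback_integral M I \<psi> / measure M I"
proof -
  have "emeasure M I < \<infinity>"
    using radon_emeasure_bounded[OF assms(1)] assms(2) unfolding real_interval_def by blast
  then have fin: "emeasure M I = ennreal (measure M I)"
    by (simp add: emeasure_eq_ennreal_measure)
  have meas: "\<psi> \<in> borel_measurable (push_I M I)"
    using test_function_borel[OF assms(4)] unfolding push_I_def by simp
  show ?thesis
  proof (cases "measure M I = 0")
    case True
    then show ?thesis unfolding norm_I_def fin by simp
  next
    case False
    then have "1 / ennreal (measure M I) = ennreal (1 / measure M I)"
      using divide_ennreal[of 1 "measure M I"] measure_nonneg[of M I] by simp
    then show ?thesis
      unfolding norm_I_def fin using False meas
      by (simp add: integral_scale_measure integral_push_I_pullback[OF assms])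
  qed
qed

lemma pullback_integral_abs_le_phi:
  assumes "radon M" "real_interval I" "\<psi> \<in> test_functions"
  shows "\<bar>pullback_integral M I \<psi>\<bar> \<le> pullback_integral M I phi"
proof -
  have "\<bar>pullback_integral M I \<psi>\<bar> \<le> (\<integral>x. \<bar>\<psi> (T_int I x)\<bar> \<partial>M)"
    unfolding pullback_integral_def using integral_norm_bound[of M "\<lambda>x. \<psi> (T_int I x)"] by simp
  also have "\<dots> \<le> pullback_integral M I phi"
    unfolding pullback_integral_def
    using integrable_pullback[OF assms] integrable_pullback[OF assms(1,2) phi_in_test_functions]
      test_function_abs_le_phi[OF assms(3)]
    by (intro integral_mono) auto
  finally show ?thesis .
qed

lemma pullback_integral_phi_le:
  assumes "radon M" "real_interval I"
  shows "pullback_integral M I phi \<le> measure M {Inf I<..<Sup I} / 2"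
proof -
  have ab: "Inf I < Sup I"
    using assms(2) unfolding real_interval_def by simp
  have "emeasure M {Inf I<..<Sup I} < \<infinity>"
    by (rule radon_emeasure_bounded[OF assms(1)]) simp
  then have "integrable M (\<lambda>x. indicator {Inf I<..<Sup I} x / 2 :: real)"
    using radon_sets_eq[OF assms(1)] by simp
  moreover have "phi (T_int I x) \<le> indicator {Inf I<..<Sup I} x / 2" for x
  proof (cases "T_int I x \<in> {0<..<1}")
    case True
    then show ?thesis
      using phi_le_half[of "T_int I x"] T_int_in_open_interval[OF ab, of x] by simp
  qed (simp add: phi_vanishes)
  ultimately have "pullback_integral M I phi \<le> (\<integral>x. indicator {Inf I<..<Sup I} x / 2 \<partial>M)"
    unfolding pullback_integral_def
    using integrable_pullback[OF assms phi_in_test_functions] by (intro integral_mono)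
  also have "\<dots> = measure M {Inf I<..<Sup I} / 2"
    using radon_space_eq[OF assms(1)] by simp
  finally show ?thesis .
qed

lemma pullback_integral_phi_ge:
  assumes "radon M" "real_interval I"
  shows "measure M (ball ((Inf I + Sup I) / 2) (ilen I / 4)) / 4 \<le> pullback_integral M I phi"
proof -
  let ?B = "ball ((Inf I + Sup I) / 2) (ilen I / 4)"
  have ab: "Inf I < Sup I"
    using assms(2) unfolding real_interval_def by simp
  have "emeasure M ?B < \<infinity>"
    by (rule radon_emeasure_bounded[OF assms(1)]) simp
  then have "integrable M (\<lambda>x. indicator ?B x / 4 :: real)"
    using radon_sets_eq[OF assms(1)] by simp
  moreover have "indicator ?B x / 4 \<le> phi (T_int I x)" for x
  proof (cases "x \<in> ?B")
    case True
    then have "\<bar>(Inf I + Sup I) / 2 - x\<bar> < ilen I / 4"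
      by (simp add: dist_real_def)
    then have "ilen I / 4 \<le> x - Inf I" "x - Inf I \<le> 3 * (ilen I / 4)"
      unfolding abs_less_iff ilen_def by (simp_all add: field_simps)
    then have "T_int I x \<in> {1/4..3/4}"
      using ab unfolding T_int_def ilen_def by (auto simp: le_divide_eq divide_le_eq)
    then show ?thesis
      using True phi_ge_quarter by simp
  qed (simp add: phi_nonneg)
  ultimately have "(\<integral>x. indicator ?B x / 4 \<partial>M) \<le> pullback_integral M I phi"
    unfolding pullback_integral_def
    using integrable_pullback[OF assms phi_in_test_functions] by (intro integral_mono)
  then show ?thesis
    using radon_space_eq[OF assms(1)] by simp
qed

lemma pullback_integral_phi_le_measure:
  assumes "radon M" "real_interval I" "I \<noteq> {}"
  shows "pullback_integral M I phi \<le> measure M I / 2"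
proof -
  have "measure M {Inf I<..<Sup I} \<le> measure M I"
  proof (rule measure_mono_fmeasurable[OF real_interval_bounds(1)[OF assms(2,3)]])
    show "{Inf I<..<Sup I} \<in> sets M"
      using radon_sets_eq[OF assms(1)] by simp
    show "I \<in> fmeasurable M"
      using radon_fmeasurable[OF assms(1)] assms(2) real_interval_borel[OF assms(2)]
      unfolding real_interval_def by blast
  qed
  then show ?thesis
    using pullback_integral_phi_le[OF assms(1,2)] by simp
qed

lemma integral_norm_phi_I_abs_le_1:
  assumes "radon M" "real_interval I" "\<psi> \<in> test_functions"
  shows "\<bar>integral\<^sup>L (norm_phi_I M I) \<psi>\<bar> \<le> 1"
proof (cases "I = {}")
  case True
  then show ?thesis using integral_norm_phi_I_empty[OF assms(1,3)] by simp
next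
  case False
  then show ?thesis
    using pullback_integral_abs_le_phi[OF assms] unfolding integral_norm_phi_I[OF assms(1,2) False assms(3)]
    by (auto simp: divide_le_eq_1)
qed

lemma integral_norm_I_abs_le_1:
  assumes "radon M" "real_interval I" "I \<noteq> {}" "\<psi> \<in> test_functions"
  shows "\<bar>integral\<^sup>L (norm_I M I) \<psi>\<bar> \<le> 1"
proof -
  have "\<bar>pullback_integral M I \<psi>\<bar> \<le> measure M I"
    using pullback_integral_abs_le_phi[OF assms(1,2,4)] pullback_integral_phi_le_measure[OF assms(1-3)]
      measure_nonneg[of M I] by linarith
  then show ?thesis
    unfolding integral_norm_I[OF assms] by (auto simp: divide_le_eq_1)
qed

lemma W1_le:
  assumes "\<And>\<psi>. \<psi> \<in> test_functions \<Longrightarrow> \<bar>integral\<^sup>L m1 \<psi> - integral\<^sup>L m2 \<psi>\<bar> \<le> B"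
  shows "W1 m1 m2 \<le> B"
  unfolding W1_eq_SUP_test_functions using zero_in_test_functions
  by (auto intro!: cSUP_least assms)

lemma W1_ge:
  assumes "\<And>\<psi>. \<psi> \<in> test_functions \<Longrightarrow> \<bar>integral\<^sup>L m1 \<psi> - integral\<^sup>L m2 \<psi>\<bar> \<le> B"
    and "\<psi> \<in> test_functions"
  shows "\<bar>integral\<^sup>L m1 \<psi> - integral\<^sup>L m2 \<psi>\<bar> \<le> W1 m1 m2"
  unfolding W1_eq_SUP_test_functions
  by (rule cSUP_upper[OF assms(2)]) (use assms(1) in \<open>auto intro!: bdd_aboveI2\<close>)

lemma integral_norm_phi_I_diff_le_2:
  assumes "radon \<mu>" "radon \<nu>" "real_interval I" "\<psi> \<in> test_functions"
  shows "\<bar>integral\<^sup>L (norm_phi_I \<mu> I) \<psi> - integral\<^sup>L (norm_phi_I \<nu> I) \<psi>\<bar> \<le> 2"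
  using integral_norm_phi_I_abs_le_1[OF assms(1,3,4)] integral_norm_phi_I_abs_le_1[OF assms(2,3,4)]
  by linarith

lemma alpha_s_le_2:
  assumes "radon \<mu>" "radon \<nu>" "real_interval I"
  shows "alpha_s \<mu> \<nu> I \<le> 2"
  unfolding alpha_s_def by (rule W1_le) (rule integral_norm_phi_I_diff_le_2[OF assms])

lemma integral_norm_phi_I_diff_le_alpha_s:
  assumes "radon \<mu>" "radon \<nu>" "real_interval I" "\<psi> \<in> test_functions"
  shows "\<bar>integral\<^sup>L (norm_phi_I \<mu> I) \<psi> - integral\<^sup>L (norm_phi_I \<nu> I) \<psi>\<bar> \<le> alpha_s \<mu> \<nu> I"
  unfolding alpha_s_def
  by (rule W1_ge[OF integral_norm_phi_I_diff_le_2[OF assms(1-3)] assms(4)])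

lemma alpha_s_nonneg:
  assumes "radon \<mu>" "radon \<nu>" "real_interval I"
  shows "0 \<le> alpha_s \<mu> \<nu> I"
  using integral_norm_phi_I_diff_le_alpha_s[OF assms zero_in_test_functions] by simp

lemma integral_norm_I_diff_le_alpha:
  assumes "radon \<mu>" "radon \<nu>" "real_interval I" "I \<noteq> {}" "\<psi> \<in> test_functions"
  shows "\<bar>integral\<^sup>L (norm_I \<mu> I) \<psi> - integral\<^sup>L (norm_I \<nu> I) \<psi>\<bar> \<le> alpha \<mu> \<nu> I"
  unfolding alpha_def
proof (rule W1_ge[where B = 2, OF _ assms(5)])
  fix \<psi> :: "real \<Rightarrow> real"
  assume "\<psi> \<in> test_functions"
  then show "\<bar>integral\<^sup>L (norm_I \<mu> I) \<psi> - integral\<^sup>L (norm_I \<nu> I) \<psi>\<bar> \<le> 2"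
    using integral_norm_I_abs_le_1[OF assms(1,3,4)] integral_norm_I_abs_le_1[OF assms(2,3,4)]
    by fastforce
qed

lemma abs_quotient_diff_le:
  fixes X Y p q \<alpha> :: real
  assumes "0 \<le> p" "0 < q" "\<bar>X\<bar> \<le> p" "\<bar>X - Y\<bar> \<le> \<alpha>" "\<bar>p - q\<bar> \<le> \<alpha>"
  shows "\<bar>X / p - Y / q\<bar> \<le> 2 * \<alpha> / q"
proof (cases "p = 0")
  case True
  then show ?thesis
    using assms by (simp add: divide_right_mono)
next
  case False
  define u where "u = X / p"
  have "\<bar>u\<bar> \<le> 1"
    using assms(1,3) False unfolding u_def by (simp add: divide_le_eq_1)
  then have "\<bar>u * (q - p)\<bar> \<le> \<alpha>"
    using assms(5) mult_mono[of "\<bar>u\<bar>" 1 "\<bar>q - p\<bar>" \<alpha>] by (simp add: abs_mult abs_minus_commute)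
  then have "\<bar>(X - Y) + u * (q - p)\<bar> \<le> 2 * \<alpha>"
    using assms(4) abs_triangle_ineq[of "X - Y" "u * (q - p)"] by linarith
  moreover have "X / p - Y / q = ((X - Y) + u * (q - p)) / q"
    using False assms(2) unfolding u_def by (simp add: field_simps)
  ultimately show ?thesis
    using assms(2) by (simp add: divide_right_mono)
qed

text \<open>The case \<open>c = 0\<close> relies on \<open>x / 0 = 0\<close>.\<close>

lemma mult_divide_mult_cancel_left_or_zero:
  fixes a b c :: real
  assumes "c \<noteq> 0 \<or> b = 0"
  shows "(c * a) / (c * b) = a / b"
  using assms by auto

section \<open>Comparison with the non-smooth coefficient\<close>

lemma integral_norm_I_abs_le_phi:
  assumes "radon M" "real_interval I" "I \<noteq> {}" "\<psi> \<in> test_functions"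
  shows "\<bar>integral\<^sup>L (norm_I M I) \<psi>\<bar> \<le> integral\<^sup>L (norm_I M I) phi"
  unfolding integral_norm_I[OF assms] integral_norm_I[OF assms(1-3) phi_in_test_functions]
  using pullback_integral_abs_le_phi[OF assms(1,2,4)] by (simp add: divide_right_mono)

lemma integral_norm_I_quotient:
  assumes "radon M" "real_interval I" "I \<noteq> {}" "\<psi> \<in> test_functions"
  shows "integral\<^sup>L (norm_I M I) \<psi> / integral\<^sup>L (norm_I M I) phi = integral\<^sup>L (norm_phi_I M I) \<psi>"
proof -
  have "1 / measure M I \<noteq> 0 \<or> pullback_integral M I phi = 0"
    using pullback_integral_phi_le_measure[OF assms(1-3)] pullback_integral_phi_nonneg[of M I]
    by fastforce
  then show ?thesis
    unfolding integral_norm_I[OF assms] integral_norm_I[OF assms(1-3) phi_in_test_functions]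
      integral_norm_phi_I[OF assms]
    using mult_divide_mult_cancel_left_or_zero[of "1 / measure M I"] by simp
qed

lemma alpha_s_le_alpha:
  assumes "radon \<mu>" "radon \<nu>" "real_interval I" "0 < emeasure \<nu> I"
    and pos: "0 < integral\<^sup>L (norm_I \<nu> I) phi"
  shows "alpha_s \<mu> \<nu> I \<le> 2 * alpha \<mu> \<nu> I / integral\<^sup>L (norm_I \<nu> I) phi"
  unfolding alpha_s_def
proof (rule W1_le)
  fix \<psi> :: "real \<Rightarrow> real"
  assume \<psi>: "\<psi> \<in> test_functions"
  have ne: "I \<noteq> {}"
    using assms(4) by auto
  let ?F = "\<lambda>M f. integral\<^sup>L (norm_I M I) f"
  have "\<bar>?F \<mu> \<psi> / ?F \<mu> phi - ?F \<nu> \<psi> / ?F \<nu> phi\<bar> \<le> 2 * alpha \<mu> \<nu> I / ?F \<nu> phi"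
  proof (rule abs_quotient_diff_le[OF _ pos])
    show "\<bar>?F \<mu> \<psi>\<bar> \<le> ?F \<mu> phi"
      by (rule integral_norm_I_abs_le_phi[OF assms(1,3) ne \<psi>])
    then show "0 \<le> ?F \<mu> phi"
      by linarith
    show "\<bar>?F \<mu> \<psi> - ?F \<nu> \<psi>\<bar> \<le> alpha \<mu> \<nu> I" "\<bar>?F \<mu> phi - ?F \<nu> phi\<bar> \<le> alpha \<mu> \<nu> I"
      using integral_norm_I_diff_le_alpha[OF assms(1-3) ne] \<psi> phi_in_test_functions by blast+
  qed
  then show "\<bar>integral\<^sup>L (norm_phi_I \<mu> I) \<psi> - integral\<^sup>L (norm_phi_I \<nu> I) \<psi>\<bar>
      \<le> 2 * alpha \<mu> \<nu> I / ?F \<nu> phi"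
    unfolding integral_norm_I_quotient[OF assms(1,3) ne \<psi>] integral_norm_I_quotient[OF assms(2,3) ne \<psi>] .
qed

section \<open>Passing to a larger interval\<close>

text \<open>\<open>rescale I J \<psi> = (|I|/|J|) \<psi> \<circ> T\<^sub>I \<circ> T\<^sub>J\<^sup>-\<^sup>1\<close>; the factor keeps it 1-Lipschitz.\<close>

definition rescale :: "real set \<Rightarrow> real set \<Rightarrow> (real \<Rightarrow> real) \<Rightarrow> real \<Rightarrow> real" where
  "rescale I J \<psi> t = ilen I / ilen J * \<psi> (T_int I (Inf J + t * ilen J))"

lemma real_interval_ilen_pos: "real_interval I \<Longrightarrow> 0 < ilen I"
  unfolding real_interval_def ilen_def by simp

lemma T_int_diff: "T_int I x - T_int I y = (x - y) / ilen I"
  unfolding T_int_def ilen_def by (simp add: diff_divide_distrib)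

lemma pullback_integral_rescale:
  assumes "real_interval J"
  shows "pullback_integral M J (rescale I J \<psi>) = ilen I / ilen J * pullback_integral M I \<psi>"
proof -
  have "Inf J + T_int J x * ilen J = x" for x
    using real_interval_ilen_pos[OF assms] unfolding T_int_def ilen_def by simp
  then show ?thesis
    unfolding pullback_integral_def rescale_def by simp
qed

lemma rescale_in_test_functions:
  assumes I: "real_interval I" and J: "real_interval J" and "I \<subseteq> J" "I \<noteq> {}"
    and \<psi>: "\<psi> \<in> test_functions"
  shows "rescale I J \<psi> \<in> test_functions"
proof -
  have L: "0 < ilen I" "0 < ilen J"
    using I J by (simp_all add: real_interval_ilen_pos)
  have "1-lipschitz_on UNIV (rescale I J \<psi>)"
  proof (rule lipschitz_onI)
    fix t u :: real
    have "rescale I J \<psi> t - rescale I J \<psi> u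
        = ilen I / ilen J * (\<psi> (T_int I (Inf J + t * ilen J)) - \<psi> (T_int I (Inf J + u * ilen J)))"
      unfolding rescale_def by (simp add: right_diff_distrib)
    then have "dist (rescale I J \<psi> t) (rescale I J \<psi> u)
        = ilen I / ilen J * \<bar>\<psi> (T_int I (Inf J + t * ilen J)) - \<psi> (T_int I (Inf J + u * ilen J))\<bar>"
      using L by (simp add: dist_real_def abs_mult)
    also have "\<dots> \<le> ilen I / ilen J * \<bar>T_int I (Inf J + t * ilen J) - T_int I (Inf J + u * ilen J)\<bar>"
      using L by (intro mult_left_mono test_function_dist_le[OF \<psi>]) simp_all
    also have "\<dots> = dist t u"
      using L unfolding T_int_diff dist_real_def by (simp add: abs_mult left_diff_distrib[symmetric])
    finally show "dist (rescale I J \<psi> t) (rescale I J \<psi> u) \<le> 1 * dist t u"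
      by simp
  qed simp
  moreover have "{t. rescale I J \<psi> t \<noteq> 0} \<subseteq> {0..1}"
  proof
    fix t
    assume "t \<in> {t. rescale I J \<psi> t \<noteq> 0}"
    then have "T_int I (Inf J + t * ilen J) \<in> {0<..<1}"
      using test_function_vanishes[OF \<psi>] unfolding rescale_def by force
    then have "Inf J + t * ilen J \<in> {Inf I<..<Sup I}"
      using T_int_in_open_interval I unfolding real_interval_def by blast
    then have "Inf I < Inf J + t * ilen J" "Inf J + t * ilen J < Sup I"
      by simp_all
    then have "0 \<le> t * ilen J" "t * ilen J \<le> ilen J"
      using real_interval_mono_bounds[OF assms(2-4)] ilen_def[of J] by linarith+
    then show "t \<in> {0..1}"
      using L by (auto simp: zero_le_mult_iff mult_le_cancel_right2)
  qed
  then have "closure {t. rescale I J \<psi> t \<noteq> 0} \<subseteq> {0..1}"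
    by (rule closure_minimal) simp
  ultimately show ?thesis
    unfolding test_functions_def by simp
qed

lemma pullback_integral_phi_le_superinterval:
  assumes "radon M" "real_interval I" "real_interval J" "I \<subseteq> J" "I \<noteq> {}"
  shows "ilen I / ilen J * pullback_integral M I phi \<le> pullback_integral M J phi"
proof -
  have "\<bar>ilen I / ilen J * pullback_integral M I phi\<bar> \<le> pullback_integral M J phi"
    using pullback_integral_abs_le_phi[OF assms(1,3)
        rescale_in_test_functions[OF assms(2-5) phi_in_test_functions]]
    unfolding pullback_integral_rescale[OF assms(3)] .
  then show ?thesis
    by (rule order_trans[OF abs_ge_self])
qed

lemma pullback_integral_phi_superinterval_eq_0:
  assumes "radon M" "real_interval I" "real_interval J" "I \<subseteq> J" "I \<noteq> {}"
    and "pullback_integral M J phi = 0"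
  shows "pullback_integral M I phi = 0"
proof -
  have "0 < ilen I / ilen J"
    using assms(2,3) by (simp add: real_interval_ilen_pos)
  moreover have "ilen I / ilen J * pullback_integral M I phi \<le> 0"
    using pullback_integral_phi_le_superinterval[OF assms(1-5)] assms(6) by simp
  ultimately show ?thesis
    using pullback_integral_phi_nonneg[of M I] by (smt (verit) mult_pos_pos)
qed

lemma integral_norm_phi_I_rescale:
  assumes "radon M" "real_interval I" "real_interval J" "I \<subseteq> J" "I \<noteq> {}" "\<psi> \<in> test_functions"
  shows "integral\<^sup>L (norm_phi_I M J) (rescale I J \<psi>)
    = ilen I / ilen J * pullback_integral M I \<psi> / pullback_integral M J phi"
proof -
  have "J \<noteq> {}"
    using assms(4,5) by blast
  then show ?thesis
    using assms by (simp add: integral_norm_phi_I rescale_in_test_functions pullback_integral_rescale)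
qed

lemma integral_norm_phi_I_rescale_quotient:
  assumes "radon M" "real_interval I" "real_interval J" "I \<subseteq> J" "I \<noteq> {}" "\<psi> \<in> test_functions"
  shows "integral\<^sup>L (norm_phi_I M J) (rescale I J \<psi>) / integral\<^sup>L (norm_phi_I M J) (rescale I J phi)
    = integral\<^sup>L (norm_phi_I M I) \<psi>"
proof -
  define c where "c = ilen I / ilen J / pullback_integral M J phi"
  have eq: "integral\<^sup>L (norm_phi_I M J) (rescale I J f) = c * pullback_integral M I f"
    if "f \<in> test_functions" for f
    using integral_norm_phi_I_rescale[OF assms(1-5) that] unfolding c_def by simp
  have "c \<noteq> 0 \<or> pullback_integral M I phi = 0"
    using pullback_integral_phi_superinterval_eq_0[OF assms(1-5)] assms(2,3)
    unfolding c_def by (auto simp: real_interval_ilen_pos dual_order.strict_implies_not_eq)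
  then show ?thesis
    unfolding eq[OF assms(6)] eq[OF phi_in_test_functions] integral_norm_phi_I[OF assms(1,2,5,6)]
    by (rule mult_divide_mult_cancel_left_or_zero)
qed

lemma doubling_mono: "doubling D \<nu> \<Longrightarrow> D \<le> D' \<Longrightarrow> doubling D' \<nu>"
  unfolding doubling_def by (meson ennreal_leI mult_right_mono order_trans zero_le)

lemma doubling_measure_ball_power:
  assumes "radon \<nu>" "doubling D \<nu>" "1 \<le> D" "0 < r"
  shows "measure \<nu> (ball x (2 ^ n * r)) \<le> D ^ n * measure \<nu> (ball x r)"
proof (induction n)
  case (Suc n)
  have fin: "emeasure \<nu> (ball x R) = ennreal (measure \<nu> (ball x R))" for R
    using radon_emeasure_bounded[OF assms(1), of "ball x R"] by (simp add: emeasure_eq_ennreal_measure)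
  have "emeasure \<nu> (ball x (2 * (2 ^ n * r))) \<le> ennreal D * emeasure \<nu> (ball x (2 ^ n * r))"
    using assms(2,4) unfolding doubling_def by simp
  then have "ennreal (measure \<nu> (ball x (2 * (2 ^ n * r))))
      \<le> ennreal (D * measure \<nu> (ball x (2 ^ n * r)))"
    using assms(3) unfolding fin by (simp add: ennreal_mult)
  then have "measure \<nu> (ball x (2 ^ Suc n * r)) \<le> D * measure \<nu> (ball x (2 ^ n * r))"
    using assms(3) by (simp add: ennreal_le_iff mult.assoc)
  also have "\<dots> \<le> D * (D ^ n * measure \<nu> (ball x r))"
    using Suc.IH assms(3) by simp
  finally show ?case
    by (simp add: mult.assoc)
qed simp

lemma pullback_integral_phi_doubling:
  assumes \<nu>: "radon \<nu>" and dbl: "doubling D \<nu>" "1 \<le> D"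
    and \<theta>: "0 < \<theta>" "4 / \<theta> \<le> 2 ^ k"
    and I: "real_interval I" and J: "real_interval J" and "I \<subseteq> J" "I \<noteq> {}"
    and len: "\<theta> * ilen J \<le> ilen I"
  shows "pullback_integral \<nu> J phi \<le> 2 * D ^ k * pullback_integral \<nu> I phi"
proof -
  define m where "m = (Inf I + Sup I) / 2"
  define r where "r = ilen I / 4"
  have r: "0 < r"
    unfolding r_def using real_interval_ilen_pos[OF I] by simp
  have "{Inf J<..<Sup J} \<subseteq> ball m (2 ^ k * r)"
  proof
    fix x
    assume "x \<in> {Inf J<..<Sup J}"
    then have "Inf J < x" "x < Sup J"
      by simp_all
    moreover have "Inf I < Sup I"
      using I unfolding real_interval_def by simp
    ultimately have "\<bar>m - x\<bar> < ilen J"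
      using real_interval_mono_bounds[OF J assms(8,9)]
      unfolding abs_less_iff m_def ilen_def by (auto simp: field_simps)
    also have "ilen J \<le> 4 / \<theta> * r"
      using len \<theta>(1) unfolding r_def by (simp add: field_simps)
    also have "\<dots> \<le> 2 ^ k * r"
      using mult_right_mono[OF \<theta>(2)] r by simp
    finally show "x \<in> ball m (2 ^ k * r)"
      by (simp add: dist_real_def)
  qed
  then have "measure \<nu> {Inf J<..<Sup J} \<le> measure \<nu> (ball m (2 ^ k * r))"
    using radon_sets_eq[OF \<nu>] by (intro measure_mono_fmeasurable radon_fmeasurable[OF \<nu>]) auto
  also have "\<dots> \<le> D ^ k * measure \<nu> (ball m r)"
    by (rule doubling_measure_ball_power[OF \<nu> dbl r])
  also have "\<dots> \<le> D ^ k * (4 * pullback_integral \<nu> I phi)"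
    using pullback_integral_phi_ge[OF \<nu> I] dbl(2) unfolding m_def r_def by simp
  finally show ?thesis
    using pullback_integral_phi_le[OF \<nu> J] by simp
qed

lemma integral_norm_phi_I_rescale_abs_le_phi:
  assumes "radon M" "real_interval I" "real_interval J" "I \<subseteq> J" "I \<noteq> {}" "\<psi> \<in> test_functions"
  shows "\<bar>integral\<^sup>L (norm_phi_I M J) (rescale I J \<psi>)\<bar> \<le> integral\<^sup>L (norm_phi_I M J) (rescale I J phi)"
proof -
  define c where "c = ilen I / ilen J / pullback_integral M J phi"
  have c: "0 \<le> c"
    unfolding c_def using real_interval_ilen_pos[OF assms(2)] real_interval_ilen_pos[OF assms(3)]
      pullback_integral_phi_nonneg[of M J] by simp
  have "\<bar>c * pullback_integral M I \<psi>\<bar> \<le> c * pullback_integral M I phi"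
    unfolding abs_mult abs_of_nonneg[OF c]
    by (rule mult_left_mono[OF pullback_integral_abs_le_phi[OF assms(1,2,6)] c])
  then show ?thesis
    unfolding integral_norm_phi_I_rescale[OF assms] c_def
      integral_norm_phi_I_rescale[OF assms(1-5) phi_in_test_functions]
    by simp
qed

lemma integral_norm_phi_I_diff_le_superinterval_null:
  assumes \<mu>: "radon \<mu>" and \<nu>: "radon \<nu>" and I: "real_interval I" and J: "real_interval J"
    and sub: "I \<subseteq> J" "I \<noteq> {}" and \<psi>: "\<psi> \<in> test_functions"
    and null: "pullback_integral \<nu> J phi = 0"
  shows "\<bar>integral\<^sup>L (norm_phi_I \<mu> I) \<psi> - integral\<^sup>L (norm_phi_I \<nu> I) \<psi>\<bar> \<le> alpha_s \<mu> \<nu> J"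
proof -
  have "integral\<^sup>L (norm_phi_I \<nu> I) \<psi> = 0"
    using integral_norm_phi_I[OF \<nu> I sub(2) \<psi>] pullback_integral_phi_superinterval_eq_0[OF \<nu> I J sub null]
    by simp
  moreover have "\<bar>integral\<^sup>L (norm_phi_I \<mu> I) \<psi>\<bar> \<le> alpha_s \<mu> \<nu> J"
  proof (cases "pullback_integral \<mu> J phi = 0")
    case True
    then show ?thesis
      using integral_norm_phi_I[OF \<mu> I sub(2) \<psi>] pullback_integral_phi_superinterval_eq_0[OF \<mu> I J sub]
        alpha_s_nonneg[OF \<mu> \<nu> J] by simp
  next
    case False
    have "J \<noteq> {}"
      using sub by blast
    then have "integral\<^sup>L (norm_phi_I \<mu> J) phi = 1" "integral\<^sup>L (norm_phi_I \<nu> J) phi = 0"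
      using False null integral_norm_phi_I[OF _ J _ phi_in_test_functions] \<mu> \<nu> by simp_all
    then have "1 \<le> alpha_s \<mu> \<nu> J"
      using integral_norm_phi_I_diff_le_alpha_s[OF \<mu> \<nu> J phi_in_test_functions] by simp
    then show ?thesis
      using integral_norm_phi_I_abs_le_1[OF \<mu> I \<psi>] by linarith
  qed
  ultimately show ?thesis
    by simp
qed

lemma integral_norm_phi_I_diff_le_superinterval_doubling:
  assumes \<mu>: "radon \<mu>" and \<nu>: "radon \<nu>" and dbl: "doubling D \<nu>" "1 \<le> D"
    and \<theta>: "0 < \<theta>" "4 / \<theta> \<le> 2 ^ k"
    and I: "real_interval I" and J: "real_interval J" and sub: "I \<subseteq> J" "I \<noteq> {}"
    and len: "\<theta> * ilen J \<le> ilen I" and \<psi>: "\<psi> \<in> test_functions"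
    and pos: "0 < pullback_integral \<nu> J phi"
  shows "\<bar>integral\<^sup>L (norm_phi_I \<mu> I) \<psi> - integral\<^sup>L (norm_phi_I \<nu> I) \<psi>\<bar>
    \<le> 4 * D ^ k / \<theta> * alpha_s \<mu> \<nu> J"
proof -
  let ?G = "\<lambda>M f. integral\<^sup>L (norm_phi_I M J) (rescale I J f)"
  let ?\<alpha> = "alpha_s \<mu> \<nu> J"
  have Dk: "1 \<le> D ^ k"
    using dbl(2) by simp
  have close: "\<bar>?G \<mu> f - ?G \<nu> f\<bar> \<le> ?\<alpha>" if "f \<in> test_functions" for f
    by (rule integral_norm_phi_I_diff_le_alpha_s[OF \<mu> \<nu> J rescale_in_test_functions[OF I J sub that]])
  have lower: "\<theta> / (2 * D ^ k) \<le> ?G \<nu> phi"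
  proof -
    have "pullback_integral \<nu> J phi \<le> 2 * D ^ k * pullback_integral \<nu> I phi"
      by (rule pullback_integral_phi_doubling[OF \<nu> dbl \<theta> I J sub len])
    then have "1 / (2 * D ^ k) \<le> pullback_integral \<nu> I phi / pullback_integral \<nu> J phi"
      using pos Dk by (simp add: field_simps)
    moreover have "\<theta> \<le> ilen I / ilen J"
      using len real_interval_ilen_pos[OF J] by (simp add: field_simps)
    ultimately have "\<theta> * (1 / (2 * D ^ k)) \<le> ilen I / ilen J * (pullback_integral \<nu> I phi / pullback_integral \<nu> J phi)"
      using \<theta>(1) Dk by (intro mult_mono) auto
    then show ?thesis
      unfolding integral_norm_phi_I_rescale[OF \<nu> I J sub phi_in_test_functions] by simp
  qed
  have q: "0 < ?G \<nu> phi"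
    using lower \<theta>(1) Dk by (smt (verit) divide_pos_pos)
  have "\<bar>integral\<^sup>L (norm_phi_I \<mu> I) \<psi> - integral\<^sup>L (norm_phi_I \<nu> I) \<psi>\<bar>
      = \<bar>?G \<mu> \<psi> / ?G \<mu> phi - ?G \<nu> \<psi> / ?G \<nu> phi\<bar>"
    using integral_norm_phi_I_rescale_quotient[OF \<mu> I J sub \<psi>]
      integral_norm_phi_I_rescale_quotient[OF \<nu> I J sub \<psi>] by simp
  also have "\<dots> \<le> 2 * ?\<alpha> / ?G \<nu> phi"
  proof (rule abs_quotient_diff_le[OF _ q])
    show "\<bar>?G \<mu> \<psi>\<bar> \<le> ?G \<mu> phi"
      by (rule integral_norm_phi_I_rescale_abs_le_phi[OF \<mu> I J sub \<psi>])
    then show "0 \<le> ?G \<mu> phi"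
      by linarith
  qed (use close \<psi> phi_in_test_functions in blast)+
  also have "\<dots> \<le> 2 * ?\<alpha> / (\<theta> / (2 * D ^ k))"
    using lower q \<theta>(1) Dk alpha_s_nonneg[OF \<mu> \<nu> J] by (intro divide_left_mono) auto
  also have "\<dots> = 4 * D ^ k / \<theta> * ?\<alpha>"
    by (simp add: field_simps)
  finally show ?thesis .
qed

lemma alpha_s_subinterval_le:
  assumes \<mu>: "radon \<mu>" and \<nu>: "radon \<nu>" and dbl: "doubling D \<nu>" "1 \<le> D"
    and \<theta>: "0 < \<theta>" "4 / \<theta> \<le> 2 ^ k"
    and I: "real_interval I" and J: "real_interval J" and sub: "I \<subseteq> J"
    and len: "\<theta> * ilen J \<le> ilen I"
  shows "alpha_s \<mu> \<nu> I \<le> (4 * D ^ k / \<theta> + 1) * alpha_s \<mu> \<nu> J"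
proof -
  have \<alpha>: "0 \<le> alpha_s \<mu> \<nu> J" and "0 \<le> 4 * D ^ k / \<theta>"
    using alpha_s_nonneg[OF \<mu> \<nu> J] \<theta>(1) dbl(2) by simp_all
  then have bounds: "1 * alpha_s \<mu> \<nu> J \<le> (4 * D ^ k / \<theta> + 1) * alpha_s \<mu> \<nu> J"
      "4 * D ^ k / \<theta> * alpha_s \<mu> \<nu> J \<le> (4 * D ^ k / \<theta> + 1) * alpha_s \<mu> \<nu> J"
    by (intro mult_right_mono; simp)+
  show ?thesis
    unfolding alpha_s_def[of \<mu> \<nu> I]
  proof (rule W1_le)
    fix \<psi> :: "real \<Rightarrow> real"
    assume \<psi>: "\<psi> \<in> test_functions"
    show "\<bar>integral\<^sup>L (norm_phi_I \<mu> I) \<psi> - integral\<^sup>L (norm_phi_I \<nu> I) \<psi>\<bar>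
        \<le> (4 * D ^ k / \<theta> + 1) * alpha_s \<mu> \<nu> J"
    proof (cases "I = {}")
      case True
      then show ?thesis
        using integral_norm_phi_I_empty[OF _ \<psi>] \<mu> \<nu> bounds(1) \<alpha> by simp
    next
      case False
      then show ?thesis
        using integral_norm_phi_I_diff_le_superinterval_null[OF \<mu> \<nu> I J sub False \<psi>]
          integral_norm_phi_I_diff_le_superinterval_doubling[OF \<mu> \<nu> dbl \<theta> I J sub False len \<psi>]
          pullback_integral_phi_nonneg[of \<nu> J] bounds
        by fastforce
    qed
  qed
qed

theorem mainTheorem9:
  fixes \<mu> \<nu> :: "real measure" and I :: "real set"
  assumes "radon \<mu>" and "radon \<nu>" and "real_interval I"
  shows "alpha_s \<mu> \<nu> I \<le> 2
    \<and> (emeasure \<nu> I > 0 \<longrightarrow> integral\<^sup>L (norm_I \<nu> I) phi > 0 \<longrightarrow>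
           alpha_s \<mu> \<nu> I \<le> 2 * alpha \<mu> \<nu> I / integral\<^sup>L (norm_I \<nu> I) phi)
    \<and> (\<forall>D \<theta>. \<theta> > 0 \<longrightarrow> (\<exists>C. \<forall>\<mu>' \<nu>' I' J. radon \<mu>' \<longrightarrow> radon \<nu>' \<longrightarrow> doubling D \<nu>' \<longrightarrow>
           real_interval I' \<longrightarrow> real_interval J \<longrightarrow> I' \<subseteq> J \<longrightarrow> ilen I' \<ge> \<theta> * ilen J \<longrightarrow>
           alpha_s \<mu>' \<nu>' I' \<le> C * alpha_s \<mu>' \<nu>' J))"
proof (intro conjI impI allI)
  show "alpha_s \<mu> \<nu> I \<le> 2"
    by (rule alpha_s_le_2[OF assms])
  show "alpha_s \<mu> \<nu> I \<le> 2 * alpha \<mu> \<nu> I / integral\<^sup>L (norm_I \<nu> I) phi"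
    if "emeasure \<nu> I > 0" "integral\<^sup>L (norm_I \<nu> I) phi > 0"
    by (rule alpha_s_le_alpha[OF assms that])
  fix D \<theta> :: real
  assume "\<theta> > 0"
  obtain k :: nat where k: "4 / \<theta> \<le> 2 ^ k"
    using real_arch_pow[of 2 "4 / \<theta>"] by (auto intro: less_imp_le)
  show "\<exists>C. \<forall>\<mu>' \<nu>' I' J. radon \<mu>' \<longrightarrow> radon \<nu>' \<longrightarrow> doubling D \<nu>' \<longrightarrow>
      real_interval I' \<longrightarrow> real_interval J \<longrightarrow> I' \<subseteq> J \<longrightarrow> ilen I' \<ge> \<theta> * ilen J \<longrightarrow>
      alpha_s \<mu>' \<nu>' I' \<le> C * alpha_s \<mu>' \<nu>' J"
    using alpha_s_subinterval_le[where D = "max D 1", OF _ _ doubling_mono[of D] _ \<open>\<theta> > 0\<close> k]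
    by fastforce
qed

end
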